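(* Let $K\ge L\ge T\ge 2$ be integers, let $\kappa,\lambda$ be the smallest non-negative integers such that $K+1+\kappa$ and $L+1+\lambda$ are coprime to $T-1$, and put $K^\star=K+1+\kappa$, $L^\star=L+1+\lambda$, $\bar T=T-1$, $q=K^\star L^\star+\bar T^2$. Let $x$ be a positive integer coprime to $q$ and $y\in\{0,\dots,q-1\}$ the unique integer with $x\bar T+yK^\star\equiv 0\pmod q$. Then every integer solution $(i,j)$ of $ix\equiv jy\pmod q$ is of the form $i=-a\bar T+bL^\star$, $j=aK^\star+b\bar T$ for some integers $a,b$. *)

theory Defs
  imports Main "HOL-Number_Theory.Cong"
begin

end

theory Submission
  imports Defs
begin

text \<open>
  Write \<open>A = K\<^sup>\<star>\<close>, \<open>B = L\<^sup>\<star>\<close>, \<open>C = T - 1\<close>, so \<open>q = A B + C\<^sup>2\<close>.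
  Multiplying \<open>A i + C j\<close> by the unit \<open>x\<close> and using the two congruences shows
  \<open>q dvd A i + C j\<close>; as \<open>A\<close> is coprime to \<open>C\<close>, hence to \<open>q\<close>, the identity
  \<open>A (B j - C i) = q j - C (A i + C j)\<close> then gives \<open>q dvd B j - C i\<close>.
  The vectors \<open>(-C, A)\<close> and \<open>(B, C)\<close> have determinant \<open>-q\<close>, so by Cramer's rule
  these two divisibilities say exactly that \<open>(i, j)\<close> is an integer combination of them.
\<close>

lemma ex_coprime_shift:
  fixes n m :: nat
  assumes "m \<noteq> 0"
  shows "\<exists>k. coprime (n + k) m"
proof
  have "n + ((m - 1) * n + 1) = n * m + 1"
    using assms by (cases m) simp_all
  moreover have "gcd m (n * m + 1) = 1"
    by (simp only: gcd_add_mult gcd_1_nat)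
  ultimately show "coprime (n + ((m - 1) * n + 1)) m"
    by (simp add: coprime_iff_gcd_eq_1 gcd.commute)
qed

lemma dvd_of_cong_unit:
  fixes q x y i j A C :: int
  assumes "coprime x q"
    and "[x * C + y * A = 0] (mod q)"
    and "[i * x = j * y] (mod q)"
  shows "q dvd A * i + C * j"
proof -
  have "q dvd A * (i * x - j * y) + j * (x * C + y * A)"
    using assms(2,3) by (simp add: cong_0_iff cong_iff_dvd_diff)
  also have "A * (i * x - j * y) + j * (x * C + y * A) = x * (A * i + C * j)"
    by (simp add: algebra_simps)
  finally show ?thesis
    using assms(1) by (simp add: coprime_dvd_mult_right_iff coprime_commute)
qed

lemma dvd_conjugate_of_dvd:
  fixes A B C i j :: int
  assumes "coprime A C"
    and "q dvd A * i + C * j"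
    and "q = A * B + C\<^sup>2"
  shows "q dvd B * j - C * i"
proof -
  have "coprime A (C\<^sup>2)"
    using assms(1) by simp
  then have "coprime A (B * A + C\<^sup>2)"
    by (simp add: coprime_iff_gcd_eq_1 gcd_add_mult)
  then have "coprime A q"
    using assms(3) by (simp add: mult.commute)
  have "q dvd q * j - C * (A * i + C * j)"
    using assms(2) by simp
  also have "q * j - C * (A * i + C * j) = A * (B * j - C * i)"
    using assms(3) by (simp add: algebra_simps power2_eq_square)
  finally show ?thesis
    using \<open>coprime A q\<close> by (simp add: coprime_dvd_mult_right_iff coprime_commute)
qed

lemma lattice_combination_of_dvd:
  fixes A B C i j :: int
  assumes "q = A * B + C\<^sup>2" and "q \<noteq> 0"
    and "q dvd A * i + C * j" and "q dvd B * j - C * i"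
  shows "\<exists>a b. i = - a * C + b * B \<and> j = a * A + b * C"
proof -
  obtain b where b: "A * i + C * j = q * b"
    using assms(3) by blast
  obtain a where a: "B * j - C * i = q * a"
    using assms(4) by blast
  have "q * (- a * C + b * B) = - C * (B * j - C * i) + B * (A * i + C * j)"
    unfolding a b by (simp add: algebra_simps)
  also have "\<dots> = q * i"
    using assms(1) by (simp add: algebra_simps power2_eq_square)
  finally have "i = - a * C + b * B"
    using assms(2) by simp
  moreover have "q * (a * A + b * C) = A * (B * j - C * i) + C * (A * i + C * j)"
    unfolding a b by (simp add: algebra_simps)
  then have "q * (a * A + b * C) = q * j"
    using assms(1) by (simp add: algebra_simps power2_eq_square)
  then have "j = a * A + b * C"
    using assms(2) by simp
  ultimately show ?thesis
    by blast
qed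

theorem lemma5:
  fixes K L T kappa lambda Ks Ls Tb q :: nat and x y i j :: int
  assumes "2 \<le> T" and "T \<le> L" and "L \<le> K"
    and "kappa = (LEAST k::nat. coprime (K + 1 + k) (T - 1))"
    and "lambda = (LEAST k::nat. coprime (L + 1 + k) (T - 1))"
    and "Ks = K + 1 + kappa" and "Ls = L + 1 + lambda" and "Tb = T - 1"
    and "q = Ks * Ls + Tb ^ 2"
    and "x > 0" and "coprime x (int q)"
    and "0 \<le> y" and "y < int q"
    and "[x * int Tb + y * int Ks = 0] (mod int q)"
    and "[i * x = j * y] (mod int q)"
  shows "\<exists>a b :: int. i = - a * int Tb + b * int Ls \<and> j = a * int Ks + b * int Tb"
proof -
  have "coprime Ks Tb"
    using assms(4,6,8) LeastI_ex[OF ex_coprime_shift[of "T - 1" "K + 1"]] assms(1) by simp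
  then have coprime_Ks_Tb: "coprime (int Ks) (int Tb)"
    by simp
  have q_eq: "int q = int Ks * int Ls + (int Tb)\<^sup>2"
    using assms(9) by simp
  have "q \<noteq> 0"
    using assms(6,7,9) by simp
  have "int q dvd int Ks * i + int Tb * j"
    using dvd_of_cong_unit assms(11,14,15) by blast
  moreover from this have "int q dvd int Ls * j - int Tb * i"
    using dvd_conjugate_of_dvd coprime_Ks_Tb q_eq by blast
  ultimately show ?thesis
    using lattice_combination_of_dvd q_eq \<open>q \<noteq> 0\<close> by simp
qed

end
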